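(* Let $n$ be even, $V=\{1,\dots,n\}$, and let $\{C,\bar C\}$ be a partition of $V$ with $|C|=|\bar C|=n/2$. Let $0\le p_{\rm out}$, $p_{\rm in}\le1$ with $0<p_{\rm in}+p_{\rm out}<2$. Let $A$ be the random symmetric $\{0,1\}$ adjacency matrix of the stochastic block model: its entries are independent Bernoulli variables (up to symmetry), with $a_{ij}=1$ with probability $p_{\rm in}$ if $i,j$ lie in the same set of the partition and with probability $p_{\rm out}$ otherwise. Let $M=A-\frac{\mathbb{1}^\top A\mathbb{1}}{n^2}J$ be its modularity matrix, let $z\in\mathbb{R}^n$ with $z_i=1$ if $i\in C$ and $z_i=-1$ otherwise, $Z=zz^\top$, and $$\gamma=\frac{p_{\rm in}-p_{\rm out}}{\sqrt{(p_{\rm in}+p_{\rm out})(2-p_{\rm in}-p_{\rm out})}}.$$ Then for every fixed $\varepsilon>0$, the probability that $\cos(M,Z)^2\ge\gamma^2-\varepsilon$ tends to $1$ as $n\to\infty$.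
   Context: $\mathbb{1}$ is the all-ones vector and $J=\mathbb{1}\mathbb{1}^\top$ the all-ones matrix. For nonzero matrices, $\cos(A,B)=\mathrm{tr}(AB^\top)/(\|A\|_F\|B\|_F)$ with $\|\cdot\|_F$ the Frobenius norm. *)

theory Defs
  imports "HOL-Probability.Probability"
begin

text \<open>Vertices are 0,...,n-1. Square n x n real matrices are functions nat => nat => real,
  only entries with indices below n matter.\<close>

definition mat_inner :: "nat \<Rightarrow> (nat \<Rightarrow> nat \<Rightarrow> real) \<Rightarrow> (nat \<Rightarrow> nat \<Rightarrow> real) \<Rightarrow> real" where
  "mat_inner n A B = (\<Sum>i<n. \<Sum>j<n. A i j * B i j)"

definition fro_norm :: "nat \<Rightarrow> (nat \<Rightarrow> nat \<Rightarrow> real) \<Rightarrow> real" where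
  "fro_norm n A = sqrt (mat_inner n A A)"

definition mat_cos :: "nat \<Rightarrow> (nat \<Rightarrow> nat \<Rightarrow> real) \<Rightarrow> (nat \<Rightarrow> nat \<Rightarrow> real) \<Rightarrow> real" where
  "mat_cos n A B = mat_inner n A B / (fro_norm n A * fro_norm n B)"

text \<open>Random SBM graph: independent Bernoulli edge indicators for index pairs (i,j), i <= j < n
  (diagonal included, as in the statement).\<close>
definition sbm_pmf :: "nat \<Rightarrow> nat set \<Rightarrow> real \<Rightarrow> real \<Rightarrow> (nat \<times> nat \<Rightarrow> bool) pmf" where
  "sbm_pmf n C pin pout =
     Pi_pmf {(i, j). i \<le> j \<and> j < n} False
       (\<lambda>(i, j). bernoulli_pmf (if (i \<in> C \<longleftrightarrow> j \<in> C) then pin else pout))"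

definition adj_mat :: "(nat \<times> nat \<Rightarrow> bool) \<Rightarrow> nat \<Rightarrow> nat \<Rightarrow> real" where
  "adj_mat E i j = (if E (min i j, max i j) then 1 else 0)"

definition modularity_mat :: "nat \<Rightarrow> (nat \<Rightarrow> nat \<Rightarrow> real) \<Rightarrow> nat \<Rightarrow> nat \<Rightarrow> real" where
  "modularity_mat n A i j = A i j - (\<Sum>k<n. \<Sum>l<n. A k l) / (real n)^2"

definition zvec :: "nat set \<Rightarrow> nat \<Rightarrow> real" where
  "zvec C i = (if i \<in> C then 1 else -1)"

definition zmat :: "nat set \<Rightarrow> nat \<Rightarrow> nat \<Rightarrow> real" where
  "zmat C i j = zvec C i * zvec C j"

definition sbm_gamma :: "real \<Rightarrow> real \<Rightarrow> real" where
  "sbm_gamma pin pout = (pin - pout) / sqrt ((pin + pout) * (2 - pin - pout))"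

end

theory Submission
  imports Defs "HOL-Real_Asymp.Real_Asymp"
begin

text \<open>
  For a 0/1 matrix \<open>A\<close> with density \<open>s = \<one>\<^sup>T A \<one> / n\<^sup>2\<close> and a balanced sign vector \<open>z\<close>,
  \<open>cos(M, Z)\<^sup>2 = x\<^sup>2 / (s (1 - s))\<close> with \<open>x = z\<^sup>T A z / n\<^sup>2\<close>. In the stochastic block model both \<open>x\<close>
  and \<open>s\<close> are linear functions of independent bounded edge indicators, with means
  \<open>(p\<^sub>i\<^sub>n - p\<^sub>o\<^sub>u\<^sub>t)/2\<close> and \<open>(p\<^sub>i\<^sub>n + p\<^sub>o\<^sub>u\<^sub>t)/2\<close>; by Hoeffding's inequality they deviate from
  these by more than \<open>\<delta>\<close> with probability \<open>O(exp(-\<delta>\<^sup>2 n\<^sup>2 / 8))\<close>. Evaluated at the means, the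
  expression is \<open>\<gamma>\<^sup>2\<close>, so continuity finishes the proof.
\<close>

lemma Pi_bernoulli_linear_deviation:
  fixes I :: "'a set" and c q :: "'a \<Rightarrow> real" and b t :: real
  assumes fin: "finite I" and "I \<noteq> {}" and "b > 0"
    and c_bound: "\<And>i. i \<in> I \<Longrightarrow> \<bar>c i\<bar> \<le> b"
    and q_prob: "\<And>i. i \<in> I \<Longrightarrow> 0 \<le> q i \<and> q i \<le> 1" and "t \<ge> 0"
  shows "measure_pmf.prob (Pi_pmf I False (\<lambda>i. bernoulli_pmf (q i)))
           {E. t \<le> \<bar>(\<Sum>i\<in>I. c i * (if E i then 1 else 0)) - (\<Sum>i\<in>I. c i * q i)\<bar>}
         \<le> 2 * exp (- t\<^sup>2 / (2 * b\<^sup>2 * card I))"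
proof -
  let ?P = "Pi_pmf I False (\<lambda>i. bernoulli_pmf (q i))"
  let ?X = "\<lambda>i E. c i * (if E i then 1 else 0 :: real)"
  have expectation: "measure_pmf.expectation ?P (?X i) = c i * q i" if "i \<in> I" for i
  proof -
    have "measure_pmf.expectation ?P (?X i)
        = measure_pmf.expectation (map_pmf (\<lambda>E. E i) ?P) (\<lambda>x. c i * (if x then 1 else 0))"
      by simp
    also have "map_pmf (\<lambda>E. E i) ?P = bernoulli_pmf (q i)"
      using fin that by (subst Pi_pmf_component) auto
    finally show ?thesis using q_prob[OF that] by simp
  qed
  interpret Hoeffding_ineq "measure_pmf ?P" I ?X "\<lambda>_. - b" "\<lambda>_. b" "\<Sum>i\<in>I. c i * q i"
  proof unfold_locales
    show "prob_space.indep_vars (measure_pmf ?P) (\<lambda>_. borel) ?X I"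
      by (intro prob_space.indep_vars_compose2[OF _ indep_vars_Pi_pmf])
         (auto simp: measure_pmf.prob_space_axioms fin)
    show "(\<Sum>i\<in>I. c i * q i) \<equiv> (\<Sum>i\<in>I. measure_pmf.expectation ?P (?X i))"
      by (rule eq_reflection, rule sum.cong[OF refl], rule expectation[symmetric])
  next
    fix i assume "i \<in> I"
    then show "AE E in measure_pmf ?P. ?X i E \<in> {- b..b}"
      using c_bound[of i] \<open>b > 0\<close> by (auto simp: abs_le_iff)
  qed (use fin in auto)
  have width: "(\<Sum>i\<in>I. (b - - b)\<^sup>2) = 4 * b\<^sup>2 * card I"
    by (simp add: power2_eq_square)
  have "4 * b\<^sup>2 * card I > 0"
    using assms(1-3) by (simp add: card_gt_0_iff)
  then have "measure_pmf.prob ?P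
           {E. t \<le> \<bar>(\<Sum>i\<in>I. ?X i E) - (\<Sum>i\<in>I. c i * q i)\<bar>} \<le> 2 * exp (- 2 * t\<^sup>2 / (4 * b\<^sup>2 * card I))"
    using Hoeffding_ineq_abs_ge[OF \<open>t \<ge> 0\<close>] unfolding width by simp
  also have "- 2 * t\<^sup>2 / (4 * b\<^sup>2 * card I) = - t\<^sup>2 / (2 * b\<^sup>2 * card I)"
    by simp
  finally show ?thesis .
qed

definition upper_pairs :: "nat \<Rightarrow> (nat \<times> nat) set" where
  "upper_pairs n = {(i, j). i \<le> j \<and> j < n}"

lemma upper_pairs_subset: "upper_pairs n \<subseteq> {..<n} \<times> {..<n}"
  by (auto simp: upper_pairs_def)

lemma finite_upper_pairs: "finite (upper_pairs n)"
  using upper_pairs_subset by (rule finite_subset) auto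

lemma card_upper_pairs_le: "card (upper_pairs n) \<le> n\<^sup>2"
  using card_mono[OF _ upper_pairs_subset] by (simp add: card_cartesian_product power2_eq_square)

lemma upper_pairs_nonempty: "n > 0 \<Longrightarrow> upper_pairs n \<noteq> {}"
  by (auto simp: upper_pairs_def)

lemma sum_square_eq_sum_upper_pairs:
  fixes G :: "nat \<Rightarrow> nat \<Rightarrow> real"
  assumes sym: "\<And>i j. G i j = G j i"
  shows "(\<Sum>i<n. \<Sum>j<n. G i j) = (\<Sum>(i, j)\<in>upper_pairs n. (if i = j then 1 else 2) * G i j)"
proof -
  have triangle: "(\<Sum>i<n. \<Sum>j<n. G i j) = (\<Sum>j<n. \<Sum>i\<le>j. (if i = j then 1 else 2) * G i j)"
  proof (induction n)
    case (Suc n)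
    have "(\<Sum>i<Suc n. \<Sum>j<Suc n. G i j)
        = (\<Sum>i<n. \<Sum>j<n. G i j) + (\<Sum>i<n. G i n) + (\<Sum>j<n. G n j) + G n n"
      by (simp add: sum.distrib)
    also have "(\<Sum>j<n. G n j) = (\<Sum>i<n. G i n)"
      using sym by simp
    finally show ?case
      using Suc.IH by (simp add: lessThan_Suc_atMost[symmetric] sum_distrib_left)
  qed simp
  have "upper_pairs n = (\<lambda>(j, i). (i, j)) ` (SIGMA j:{..<n}. {..j})"
    by (auto simp: upper_pairs_def)
  moreover have "inj_on (\<lambda>(j, i). (i, j)) (SIGMA j:{..<n}. {..j})"
    by (auto simp: inj_on_def)
  ultimately show ?thesis
    unfolding triangle by (simp add: sum.reindex sum.Sigma split_def)
qed

lemma sum_adj_mat_eq_sum_upper_pairs: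
  fixes W :: "nat \<Rightarrow> nat \<Rightarrow> real"
  assumes "\<And>i j. W i j = W j i"
  shows "(\<Sum>i<n. \<Sum>j<n. adj_mat E i j * W i j)
       = (\<Sum>(i, j)\<in>upper_pairs n. (if i = j then 1 else 2) * W i j * (if E (i, j) then 1 else 0))"
proof -
  have "(\<Sum>i<n. \<Sum>j<n. adj_mat E i j * W i j)
      = (\<Sum>(i, j)\<in>upper_pairs n. (if i = j then 1 else 2) * (adj_mat E i j * W i j))"
    using assms by (intro sum_square_eq_sum_upper_pairs) (simp add: adj_mat_def min.commute max.commute)
  also have "\<dots> = (\<Sum>(i, j)\<in>upper_pairs n. (if i = j then 1 else 2) * W i j * (if E (i, j) then 1 else 0))"
    by (intro sum.cong) (auto simp: upper_pairs_def adj_mat_def)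
  finally show ?thesis .
qed

lemma sum_lessThan_if_mem:
  fixes a b :: real
  assumes "C \<subseteq> {..<n}"
  shows "(\<Sum>j<n. if j \<in> C then a else b) = real (card C) * a + real (n - card C) * b"
proof -
  have "(\<Sum>j<n. if j \<in> C then a else b) = (\<Sum>j\<in>C. a) + (\<Sum>j\<in>{..<n} - C. b)"
    using assms by (subst sum.If_cases) (auto simp: Int_absorb1 Diff_eq)
  moreover have "card ({..<n} - C) = n - card C"
    using assms by (simp add: card_Diff_subset finite_subset)
  ultimately show ?thesis by simp
qed

lemma mat_inner_self_nonneg: "mat_inner n A A \<ge> 0"
  unfolding mat_inner_def by (intro sum_nonneg) simp

lemma mat_inner_zmat_self: "mat_inner n (zmat C) (zmat C) = (real n)\<^sup>2"
proof -
  have "zmat C i j * zmat C i j = 1" for i j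
    by (simp add: zmat_def zvec_def)
  then show ?thesis by (simp add: mat_inner_def power2_eq_square)
qed

lemma mat_inner_modularity_zmat:
  assumes "(\<Sum>i<n. zvec C i) = 0"
  shows "mat_inner n (modularity_mat n A) (zmat C) = mat_inner n A (zmat C)"
proof -
  define s where "s = (\<Sum>k<n. \<Sum>l<n. A k l) / (real n)\<^sup>2"
  have row: "(\<Sum>j<n. s * (zvec C i * zvec C j)) = 0" for i
    using assms by (simp add: sum_distrib_left[symmetric] mult.assoc[symmetric])
  have "mat_inner n (modularity_mat n A) (zmat C)
      = (\<Sum>i<n. (\<Sum>j<n. A i j * zmat C i j) - (\<Sum>j<n. s * (zvec C i * zvec C j)))"
    unfolding mat_inner_def modularity_mat_def zmat_def s_def
    by (simp add: left_diff_distrib sum_subtractf)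
  then show ?thesis by (simp add: row mat_inner_def)
qed

lemma mat_inner_modularity_self:
  assumes "n > 0"
  shows "mat_inner n (modularity_mat n A) (modularity_mat n A)
       = mat_inner n A A - (\<Sum>i<n. \<Sum>j<n. A i j)\<^sup>2 / (real n)\<^sup>2"
proof -
  define S where "S = (\<Sum>i<n. \<Sum>j<n. A i j)"
  define s where "s = S / (real n)\<^sup>2"
  have "mat_inner n (modularity_mat n A) (modularity_mat n A)
      = (\<Sum>i<n. \<Sum>j<n. A i j * A i j - 2 * s * A i j + s * s)"
    unfolding mat_inner_def modularity_mat_def s_def S_def
    by (intro sum.cong refl) (simp add: algebra_simps power2_eq_square)
  also have "\<dots> = mat_inner n A A - 2 * s * S + (real n)\<^sup>2 * s * s"
    by (simp add: mat_inner_def sum.distrib sum_subtractf sum_distrib_left S_def power2_eq_square)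
  also have "\<dots> = mat_inner n A A - S\<^sup>2 / (real n)\<^sup>2"
    using assms by (simp add: s_def power2_eq_square field_simps)
  finally show ?thesis by (simp add: S_def)
qed

text \<open>For a 0/1 matrix, \<open>\<parallel>A\<parallel>\<^sub>F\<^sup>2 = \<one>\<^sup>T A \<one>\<close>, so \<open>\<parallel>M\<parallel>\<^sub>F\<^sup>2 = n\<^sup>2 s (1 - s)\<close> with \<open>s\<close> the edge density.\<close>
lemma mat_cos_modularity_zmat_sq:
  fixes A :: "nat \<Rightarrow> nat \<Rightarrow> real"
  assumes "n > 0" and zero_one: "\<And>i j. A i j * A i j = A i j"
    and balanced: "(\<Sum>i<n. zvec C i) = 0"
  shows "(mat_cos n (modularity_mat n A) (zmat C))\<^sup>2
       = ((\<Sum>i<n. \<Sum>j<n. A i j * zmat C i j) / (real n)\<^sup>2)\<^sup>2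
         / ((\<Sum>i<n. \<Sum>j<n. A i j) / (real n)\<^sup>2 * (1 - (\<Sum>i<n. \<Sum>j<n. A i j) / (real n)\<^sup>2))"
proof -
  define S where "S = (\<Sum>i<n. \<Sum>j<n. A i j)"
  define N where "N = (real n)\<^sup>2"
  have "N > 0" using assms by (simp add: N_def)
  have "mat_inner n A A = S"
    by (simp add: mat_inner_def zero_one S_def)
  then have norm_M: "mat_inner n (modularity_mat n A) (modularity_mat n A) = S - S\<^sup>2 / N"
    using mat_inner_modularity_self[OF \<open>n > 0\<close>] by (simp add: S_def N_def)
  have "(mat_cos n (modularity_mat n A) (zmat C))\<^sup>2
      = (mat_inner n A (zmat C))\<^sup>2 / ((S - S\<^sup>2 / N) * N)"
    unfolding mat_cos_def fro_norm_def
    using mat_inner_self_nonneg[of n "modularity_mat n A"]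
    by (simp add: norm_M mat_inner_modularity_zmat[OF balanced] mat_inner_zmat_self N_def
        power_divide power_mult_distrib)
  also have "\<dots> = (mat_inner n A (zmat C) / N)\<^sup>2 / (S / N * (1 - S / N))"
  proof -
    have "S / N * (1 - S / N) = (S - S\<^sup>2 / N) * N / N\<^sup>2"
      using \<open>N > 0\<close> by (simp add: field_simps power2_eq_square)
    then show ?thesis
      using \<open>N > 0\<close> by (simp add: power_divide)
  qed
  finally show ?thesis by (simp add: mat_inner_def S_def N_def)
qed

lemma sum_zvec_balanced:
  assumes "C \<subseteq> {..<2 * m}" "card C = m"
  shows "(\<Sum>i<2 * m. zvec C i) = 0"
  using sum_lessThan_if_mem[OF assms(1), of 1 "- 1"] assms(2) by (simp add: zvec_def)

definition sbm_edge_prob :: "nat set \<Rightarrow> real \<Rightarrow> real \<Rightarrow> nat \<Rightarrow> nat \<Rightarrow> real" where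
  "sbm_edge_prob C pin pout i j = (if i \<in> C \<longleftrightarrow> j \<in> C then pin else pout)"

lemma sbm_edge_prob_commute: "sbm_edge_prob C pin pout i j = sbm_edge_prob C pin pout j i"
  by (auto simp: sbm_edge_prob_def)

lemma sbm_pmf_eq_Pi_pmf:
  "sbm_pmf n C pin pout =
     Pi_pmf (upper_pairs n) False (\<lambda>(i, j). bernoulli_pmf (sbm_edge_prob C pin pout i j))"
  by (simp add: sbm_pmf_def upper_pairs_def sbm_edge_prob_def)

lemma sum_sbm_edge_prob_balanced:
  assumes C: "C \<subseteq> {..<2 * m}" "card C = m"
  shows "(\<Sum>i<2 * m. \<Sum>j<2 * m. sbm_edge_prob C pin pout i j * zmat C i j)
           = (real (2 * m))\<^sup>2 * ((pin - pout) / 2)"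
    and "(\<Sum>i<2 * m. \<Sum>j<2 * m. sbm_edge_prob C pin pout i j)
           = (real (2 * m))\<^sup>2 * ((pin + pout) / 2)"
proof -
  have count: "(\<Sum>j<2 * m. if j \<in> C then a else b) = real m * a + real m * b" for a b
    using sum_lessThan_if_mem[OF C(1)] C(2) by simp
  have swap: "(if \<not> P then a else b) = (if P then b else a)" for P and a b :: real
    by simp
  have "(\<Sum>j<2 * m. sbm_edge_prob C pin pout i j * zmat C i j) = real m * (pin - pout)" for i
    using count[of pin "- pout"] count[of "- pout" pin]
    by (cases "i \<in> C") (simp_all add: sbm_edge_prob_def zmat_def zvec_def if_distrib algebra_simps
        cong: if_cong)
  then show "(\<Sum>i<2 * m. \<Sum>j<2 * m. sbm_edge_prob C pin pout i j * zmat C i j)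
           = (real (2 * m))\<^sup>2 * ((pin - pout) / 2)"
    by (simp add: power2_eq_square)
  have "(\<Sum>j<2 * m. sbm_edge_prob C pin pout i j) = real m * (pin + pout)" for i
    using count[of pin pout] count[of pout pin]
    by (cases "i \<in> C") (simp_all add: sbm_edge_prob_def swap algebra_simps)
  then show "(\<Sum>i<2 * m. \<Sum>j<2 * m. sbm_edge_prob C pin pout i j)
           = (real (2 * m))\<^sup>2 * ((pin + pout) / 2)"
    by (simp add: power2_eq_square)
qed

lemma sbm_weighted_edge_sum_deviation:
  fixes W :: "nat \<Rightarrow> nat \<Rightarrow> real" and d :: real
  assumes p: "0 \<le> pin" "pin \<le> 1" "0 \<le> pout" "pout \<le> 1" and "n > 0" "d \<ge> 0"
    and W_sym: "\<And>i j. W i j = W j i" and W_bound: "\<And>i j. \<bar>W i j\<bar> \<le> 1"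
  shows "measure_pmf.prob (sbm_pmf n C pin pout)
           {E. d \<le> \<bar>(\<Sum>i<n. \<Sum>j<n. adj_mat E i j * W i j) / (real n)\<^sup>2
                    - (\<Sum>i<n. \<Sum>j<n. sbm_edge_prob C pin pout i j * W i j) / (real n)\<^sup>2\<bar>}
         \<le> 2 * exp (- (d\<^sup>2 * (real n)\<^sup>2) / 8)"
proof -
  define N where "N = (real n)\<^sup>2"
  define P where "P = upper_pairs n"
  define c where "c = (\<lambda>(i, j). (if i = j then 1 else 2) * W i j)"
  define q where "q = (\<lambda>(i, j). sbm_edge_prob C pin pout i j)"
  have "N > 0" using \<open>n > 0\<close> by (simp add: N_def)
  have c_bound: "\<bar>c e\<bar> \<le> 2" for e
    using W_bound[of "fst e" "snd e"] by (auto simp: c_def split_def abs_mult)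
  have sum_adj: "(\<Sum>i<n. \<Sum>j<n. adj_mat E i j * W i j) = (\<Sum>e\<in>P. c e * (if E e then 1 else 0))" for E
    unfolding sum_adj_mat_eq_sum_upper_pairs[OF W_sym] P_def c_def by (simp add: split_def)
  have sum_prob: "(\<Sum>i<n. \<Sum>j<n. sbm_edge_prob C pin pout i j * W i j) = (\<Sum>e\<in>P. c e * q e)"
  proof -
    have "(\<Sum>i<n. \<Sum>j<n. sbm_edge_prob C pin pout i j * W i j)
        = (\<Sum>(i, j)\<in>P. (if i = j then 1 else 2) * (sbm_edge_prob C pin pout i j * W i j))"
      unfolding P_def by (rule sum_square_eq_sum_upper_pairs) (simp add: W_sym sbm_edge_prob_commute)
    then show ?thesis by (simp add: c_def q_def split_def ac_simps)
  qed
  have "measure_pmf.prob (sbm_pmf n C pin pout)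
           {E. d \<le> \<bar>(\<Sum>i<n. \<Sum>j<n. adj_mat E i j * W i j) / N
                    - (\<Sum>i<n. \<Sum>j<n. sbm_edge_prob C pin pout i j * W i j) / N\<bar>}
      = measure_pmf.prob (Pi_pmf P False (\<lambda>e. bernoulli_pmf (q e)))
           {E. d * N \<le> \<bar>(\<Sum>e\<in>P. c e * (if E e then 1 else 0)) - (\<Sum>e\<in>P. c e * q e)\<bar>}"
    using \<open>N > 0\<close>
    by (simp add: sbm_pmf_eq_Pi_pmf sum_adj sum_prob P_def q_def split_def
        diff_divide_distrib[symmetric] abs_divide le_divide_eq)
  also have "\<dots> \<le> 2 * exp (- (d * N)\<^sup>2 / (2 * 2\<^sup>2 * real (card P)))"
    using c_bound p \<open>N > 0\<close> \<open>d \<ge> 0\<close>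
    by (intro Pi_bernoulli_linear_deviation)
       (auto simp: P_def finite_upper_pairs upper_pairs_nonempty[OF \<open>n > 0\<close>] q_def sbm_edge_prob_def)
  also have "\<dots> \<le> 2 * exp (- (d\<^sup>2 * N) / 8)"
  proof -
    have "real (card P) \<le> N"
      using card_upper_pairs_le[of n] by (simp add: P_def N_def flip: of_nat_power)
    moreover have "real (card P) > 0"
      using finite_upper_pairs upper_pairs_nonempty[OF \<open>n > 0\<close>] by (simp add: P_def card_gt_0_iff)
    moreover have "d\<^sup>2 * real (card P) \<le> d\<^sup>2 * N"
      using \<open>real (card P) \<le> N\<close> by (simp add: mult_left_mono)
    ultimately have "d\<^sup>2 * N / 8 \<le> (d * N)\<^sup>2 / (2 * 2\<^sup>2 * real (card P))"
      using \<open>N > 0\<close> by (simp add: field_simps power2_eq_square)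
    then show ?thesis by simp
  qed
  finally show ?thesis by (simp add: N_def)
qed

lemma sq_div_variance_lower_bound_near:
  fixes x0 y0 e :: real
  assumes "0 < y0" "y0 < 1" "e > 0"
  obtains d where "d > 0"
    and "\<And>x y. \<bar>x - x0\<bar> < d \<Longrightarrow> \<bar>y - y0\<bar> < d \<Longrightarrow> x0\<^sup>2 / (y0 * (1 - y0)) - e < x\<^sup>2 / (y * (1 - y))"
proof -
  let ?g = "\<lambda>p :: real \<times> real. (fst p)\<^sup>2 / (snd p * (1 - snd p))"
  have "continuous (at (x0, y0)) ?g"
    using assms by (intro continuous_intros) auto
  then obtain d where "d > 0" and d: "\<And>p. dist p (x0, y0) < d \<Longrightarrow> dist (?g p) (?g (x0, y0)) < e"
    using \<open>e > 0\<close> unfolding continuous_at_eps_delta by metis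
  show ?thesis
  proof (rule that[of "d / 2"])
    show "d / 2 > 0" using \<open>d > 0\<close> by simp
    fix x y assume "\<bar>x - x0\<bar> < d / 2" "\<bar>y - y0\<bar> < d / 2"
    then have "dist (x, y) (x0, y0) < d"
      using sqrt_sum_squares_le_sum_abs[of "x - x0" "y - y0"]
      by (simp add: dist_Pair_Pair dist_real_def)
    then show "x0\<^sup>2 / (y0 * (1 - y0)) - e < x\<^sup>2 / (y * (1 - y))"
      using d[of "(x, y)"] by (simp add: dist_real_def)
  qed
qed

lemma sbm_gamma_sq:
  assumes "0 < pin + pout" "pin + pout < 2"
  shows "(sbm_gamma pin pout)\<^sup>2
       = ((pin - pout) / 2)\<^sup>2 / ((pin + pout) / 2 * (1 - (pin + pout) / 2))"
proof -
  have "(pin + pout) * (2 - pin - pout) > 0"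
    using assms by simp
  then show ?thesis
    by (simp add: sbm_gamma_def power_divide field_simps)
qed

lemma sbm_balanced_statistics_deviation:
  fixes pin pout d :: real
  assumes p: "0 \<le> pin" "pin \<le> 1" "0 \<le> pout" "pout \<le> 1"
    and C: "C \<subseteq> {..<2 * m}" "card C = m" and "m > 0" and "d \<ge> 0"
  shows "measure_pmf.prob (sbm_pmf (2 * m) C pin pout)
           {E. d \<le> \<bar>(\<Sum>i<2 * m. \<Sum>j<2 * m. adj_mat E i j * zmat C i j) / (real (2 * m))\<^sup>2
                    - (pin - pout) / 2\<bar>}
         \<le> 2 * exp (- (d\<^sup>2 * (real (2 * m))\<^sup>2) / 8)" (is ?dev_x)
    and "measure_pmf.prob (sbm_pmf (2 * m) C pin pout)
           {E. d \<le> \<bar>(\<Sum>i<2 * m. \<Sum>j<2 * m. adj_mat E i j) / (real (2 * m))\<^sup>2 - (pin + pout) / 2\<bar>}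
         \<le> 2 * exp (- (d\<^sup>2 * (real (2 * m))\<^sup>2) / 8)" (is ?dev_y)
proof -
  have "2 * m > 0" using \<open>m > 0\<close> by simp
  have mean_x: "(\<Sum>i<2 * m. \<Sum>j<2 * m. sbm_edge_prob C pin pout i j * zmat C i j) / (real (2 * m))\<^sup>2
      = (pin - pout) / 2"
    using sum_sbm_edge_prob_balanced(1)[OF C] \<open>m > 0\<close> by simp
  show ?dev_x
    unfolding mean_x[symmetric]
    by (rule sbm_weighted_edge_sum_deviation) (use p \<open>2 * m > 0\<close> \<open>d \<ge> 0\<close> in \<open>auto simp: zmat_def zvec_def\<close>)
  have mean_y: "(\<Sum>i<2 * m. \<Sum>j<2 * m. sbm_edge_prob C pin pout i j) / (real (2 * m))\<^sup>2 = (pin + pout) / 2"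
    using sum_sbm_edge_prob_balanced(2)[OF C] \<open>m > 0\<close> by simp
  show ?dev_y
    unfolding mean_y[symmetric]
    using sbm_weighted_edge_sum_deviation[OF p \<open>2 * m > 0\<close> \<open>d \<ge> 0\<close>, of "\<lambda>_ _. 1" C] by simp
qed

lemma sbm_cos_sq_prob_lower_bound:
  fixes pin pout G d :: real and C :: "nat set"
  assumes p: "0 \<le> pin" "pin \<le> 1" "0 \<le> pout" "pout \<le> 1"
    and C: "C \<subseteq> {..<2 * m}" "card C = m" and "m > 0" and "d > 0"
    and near: "\<And>x y. \<bar>x - (pin - pout) / 2\<bar> < d \<Longrightarrow> \<bar>y - (pin + pout) / 2\<bar> < d
                 \<Longrightarrow> G < x\<^sup>2 / (y * (1 - y))"
  shows "1 - 4 * exp (- (d\<^sup>2 * (real (2 * m))\<^sup>2) / 8)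
       \<le> measure_pmf.prob (sbm_pmf (2 * m) C pin pout)
           {E. G \<le> (mat_cos (2 * m) (modularity_mat (2 * m) (adj_mat E)) (zmat C))\<^sup>2}"
proof -
  define n where "n = 2 * m"
  define \<Omega> where "\<Omega> = sbm_pmf n C pin pout"
  define x where "x E = (\<Sum>i<n. \<Sum>j<n. adj_mat E i j * zmat C i j) / (real n)\<^sup>2" for E
  define y where "y E = (\<Sum>i<n. \<Sum>j<n. adj_mat E i j) / (real n)\<^sup>2" for E
  define B where "B = {E. d \<le> \<bar>x E - (pin - pout) / 2\<bar>} \<union> {E. d \<le> \<bar>y E - (pin + pout) / 2\<bar>}"
  have "n > 0" using \<open>m > 0\<close> by (simp add: n_def)
  have "measure_pmf.prob \<Omega> B
      \<le> measure_pmf.prob \<Omega> {E. d \<le> \<bar>x E - (pin - pout) / 2\<bar>}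
        + measure_pmf.prob \<Omega> {E. d \<le> \<bar>y E - (pin + pout) / 2\<bar>}"
    unfolding B_def by (rule measure_Un_le) auto
  also have "\<dots> \<le> 4 * exp (- (d\<^sup>2 * (real n)\<^sup>2) / 8)"
    using sbm_balanced_statistics_deviation[OF p C \<open>m > 0\<close> less_imp_le[OF \<open>d > 0\<close>]]
    unfolding \<Omega>_def x_def y_def n_def by linarith
  finally have "measure_pmf.prob \<Omega> B \<le> 4 * exp (- (d\<^sup>2 * (real n)\<^sup>2) / 8)" .
  moreover have "UNIV - B \<subseteq> {E. G \<le> (mat_cos n (modularity_mat n (adj_mat E)) (zmat C))\<^sup>2}"
  proof safe
    fix E assume "E \<notin> B"
    have "(mat_cos n (modularity_mat n (adj_mat E)) (zmat C))\<^sup>2 = (x E)\<^sup>2 / (y E * (1 - y E))"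
      using mat_cos_modularity_zmat_sq[OF \<open>n > 0\<close>, of "adj_mat E" C] sum_zvec_balanced[OF C]
      by (simp add: x_def y_def n_def adj_mat_def)
    also have "G < \<dots>"
      using near \<open>E \<notin> B\<close> by (simp add: B_def)
    finally show "G \<le> (mat_cos n (modularity_mat n (adj_mat E)) (zmat C))\<^sup>2" by simp
  qed
  then have "measure_pmf.prob \<Omega> (UNIV - B)
      \<le> measure_pmf.prob \<Omega> {E. G \<le> (mat_cos n (modularity_mat n (adj_mat E)) (zmat C))\<^sup>2}"
    by (rule measure_pmf.finite_measure_mono) simp
  moreover have "measure_pmf.prob \<Omega> (UNIV - B) = 1 - measure_pmf.prob \<Omega> B"
    using measure_pmf.prob_compl[of B \<Omega>] by simp
  ultimately show ?thesis
    by (simp add: \<Omega>_def n_def)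
qed

theorem lemma9:
  fixes pin pout \<epsilon> :: real and C :: "nat \<Rightarrow> nat set"
  assumes "0 \<le> pin" "pin \<le> 1" "0 \<le> pout" "pout \<le> 1"
    and "0 < pin + pout" "pin + pout < 2"
    and "\<epsilon> > 0"
    and "\<And>m. C m \<subseteq> {..<2 * m} \<and> card (C m) = m"
  shows "(\<lambda>m. measure_pmf.prob (sbm_pmf (2 * m) (C m) pin pout)
            {E. (mat_cos (2 * m) (modularity_mat (2 * m) (adj_mat E)) (zmat (C m)))^2
                  \<ge> (sbm_gamma pin pout)^2 - \<epsilon>}) \<longlonglongrightarrow> 1"
proof -
  obtain d where "d > 0" and near: "\<And>x y. \<bar>x - (pin - pout) / 2\<bar> < d \<Longrightarrow> \<bar>y - (pin + pout) / 2\<bar> < d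
      \<Longrightarrow> (sbm_gamma pin pout)\<^sup>2 - \<epsilon> < x\<^sup>2 / (y * (1 - y))"
    using sq_div_variance_lower_bound_near[of "(pin + pout) / 2" \<epsilon> "(pin - pout) / 2"] assms(5-7)
    unfolding sbm_gamma_sq[OF assms(5,6)] by auto
  have lower: "eventually (\<lambda>m. 1 - 4 * exp (- (d\<^sup>2 * (real (2 * m))\<^sup>2) / 8)
      \<le> measure_pmf.prob (sbm_pmf (2 * m) (C m) pin pout)
           {E. (mat_cos (2 * m) (modularity_mat (2 * m) (adj_mat E)) (zmat (C m)))^2
                 \<ge> (sbm_gamma pin pout)^2 - \<epsilon>}) sequentially"
    using sbm_cos_sq_prob_lower_bound[OF assms(1-4) _ _ _ \<open>d > 0\<close> near] assms(8)
    by (intro eventually_sequentiallyI[of 1]) auto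
  have limit: "(\<lambda>m. 1 - 4 * exp (- (d\<^sup>2 * (real (2 * m))\<^sup>2) / 8)) \<longlonglongrightarrow> 1"
    using \<open>d > 0\<close> by real_asymp
  show ?thesis
    by (rule tendsto_sandwich[OF lower _ limit tendsto_const]) (simp add: measure_pmf.prob_le_1)
qed

end
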